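(* Let each $f_\xi:\mathbb{R}^d\to\mathbb{R}$, $\xi\sim\mathcal{D}$, be differentiable and $\mu$-strongly convex with $\mu>0$, let $f=\mathbb{E}_{\xi\sim\mathcal{D}}[f_\xi]$ with minimizer $x_\star$, and define $\sigma_\star^2:=\mathbb{E}_{\xi\sim\mathcal{D}}\|\nabla f_\xi(x_\star)\|^2$. Let $x_0\in\mathbb{R}^d$ be arbitrary and consider SPPM: $x_{k+1}=\operatorname{prox}_{\gamma f_{\xi_k}}(x_k)$, with $\xi_k\sim\mathcal{D}$ sampled independently at each step. Then for any $\gamma>0$ and any $k\ge0$, $$\mathbb{E}\|x_k-x_\star\|^2\le\left(\frac{1}{1+\gamma\mu}\right)^{2k}\|x_0-x_\star\|^2+\frac{\gamma\sigma_\star^2}{\gamma\mu^2+2\mu}.$$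
   Context: $\operatorname{prox}_{\gamma\phi}(y):=\arg\min_{x\in\mathbb{R}^d}\{\phi(x)+\frac{1}{2\gamma}\|x-y\|^2\}$. $\mu$-strong convexity of $g$: $g(y)+\langle\nabla g(y),x-y\rangle+\frac{\mu}{2}\|x-y\|^2\le g(x)$ for all $x,y$. Differentiation and expectation are assumed interchangeable, so $\nabla f=\mathbb{E}[\nabla f_\xi]$. *)

theory Defs
  imports "HOL-Probability.Probability"
begin

definition prox :: "real \<Rightarrow> ('a::real_normed_vector \<Rightarrow> real) \<Rightarrow> 'a \<Rightarrow> 'a" where
  "prox \<gamma> \<phi> y = arg_min (\<lambda>x. \<phi> x + (norm (x - y))\<^sup>2 / (2 * \<gamma>)) (\<lambda>_. True)"

definition strongly_convex_grad :: "real \<Rightarrow> ('a::real_inner \<Rightarrow> real) \<Rightarrow> ('a \<Rightarrow> 'a) \<Rightarrow> bool" where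
  "strongly_convex_grad \<mu> g dg \<longleftrightarrow>
     (\<forall>x y. g y + dg y \<bullet> (x - y) + \<mu> / 2 * (norm (x - y))\<^sup>2 \<le> g x)"

primrec sppm :: "real \<Rightarrow> ('b \<Rightarrow> 'a::real_normed_vector \<Rightarrow> real) \<Rightarrow> 'a \<Rightarrow> 'b stream \<Rightarrow> nat \<Rightarrow> 'a" where
  "sppm \<gamma> f x0 \<omega> 0 = x0"
| "sppm \<gamma> f x0 \<omega> (Suc k) = prox \<gamma> (f (\<omega> !! k)) (sppm \<gamma> f x0 \<omega> k)"

end

theory Submission
  imports Defs
begin

text \<open>
  The proximal step \<open>y = prox \<gamma> f\<^sub>\<xi> x\<close> is the implicit gradient step \<open>y = x - \<gamma> \<nabla>f\<^sub>\<xi> y\<close>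
  (first-order optimality of a strongly convex objective). Strong convexity makes \<open>\<nabla>f\<^sub>\<xi>\<close>
  \<open>\<mu>\<close>-strongly monotone, whence \<open>(1 + \<gamma>\<mu>) \<parallel>y - x\<^sub>\<star>\<parallel> \<le> \<parallel>x - x\<^sub>\<star> - \<gamma> \<nabla>f\<^sub>\<xi> x\<^sub>\<star>\<parallel>\<close>. As
  \<open>E \<nabla>f\<^sub>\<xi> x\<^sub>\<star> = \<nabla>f x\<^sub>\<star> = 0\<close>, averaging over \<open>\<xi>\<close> kills the cross term:
  \<open>E \<parallel>y - x\<^sub>\<star>\<parallel>\<^sup>2 \<le> (1 + \<gamma>\<mu>)\<^sup>-\<^sup>2 (\<parallel>x - x\<^sub>\<star>\<parallel>\<^sup>2 + \<gamma>\<^sup>2\<sigma>\<^sub>\<star>\<^sup>2)\<close>. Unrolling this one-step bound along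
  the independent samples and summing the geometric series of noise terms gives the claim.
\<close>


lemma strongly_convex_grad_inner_ge:
  assumes "strongly_convex_grad \<mu> f g"
  shows "(g y - g x) \<bullet> (y - x) \<ge> \<mu> * (norm (y - x))\<^sup>2"
proof -
  have "f x + g x \<bullet> (y - x) + \<mu> / 2 * (norm (y - x))\<^sup>2 \<le> f y"
    and "f y + g y \<bullet> (x - y) + \<mu> / 2 * (norm (x - y))\<^sup>2 \<le> f x"
    using assms unfolding strongly_convex_grad_def by blast+
  then show ?thesis
    by (simp add: norm_minus_commute algebra_simps)
qed

lemma strongly_convex_grad_add:
  assumes "strongly_convex_grad \<mu> f g" and "strongly_convex_grad \<nu> h dh"
  shows "strongly_convex_grad (\<mu> + \<nu>) (\<lambda>x. f x + h x) (\<lambda>x. g x + dh x)"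
  unfolding strongly_convex_grad_def
proof (intro allI)
  fix x y
  have "f y + g y \<bullet> (x - y) + \<mu> / 2 * (norm (x - y))\<^sup>2 \<le> f x"
    and "h y + dh y \<bullet> (x - y) + \<nu> / 2 * (norm (x - y))\<^sup>2 \<le> h x"
    using assms unfolding strongly_convex_grad_def by blast+
  then show "f y + h y + (g y + dh y) \<bullet> (x - y) + (\<mu> + \<nu>) / 2 * (norm (x - y))\<^sup>2 \<le> f x + h x"
    by (simp add: inner_add_left add_divide_distrib distrib_right)
qed

lemma strongly_convex_grad_sq_dist:
  "strongly_convex_grad (1 / \<gamma>) (\<lambda>u. (norm (u - z))\<^sup>2 / (2 * \<gamma>)) (\<lambda>u. (1 / \<gamma>) *\<^sub>R (u - z))"
  unfolding strongly_convex_grad_def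
proof (intro allI)
  fix x y :: 'a
  have "(norm (x - z))\<^sup>2 = (norm (y - z))\<^sup>2 + 2 * ((y - z) \<bullet> (x - y)) + (norm (x - y))\<^sup>2"
    unfolding power2_norm_eq_inner
    by (simp add: inner_commute algebra_simps)
  then show "(norm (y - z))\<^sup>2 / (2 * \<gamma>) + (1 / \<gamma>) *\<^sub>R (y - z) \<bullet> (x - y)
      + 1 / \<gamma> / 2 * (norm (x - y))\<^sup>2 \<le> (norm (x - z))\<^sup>2 / (2 * \<gamma>)"
    by (simp add: add_divide_distrib)
qed

lemma gradient_eq_0_at_min:
  fixes f :: "'a::real_inner \<Rightarrow> real"
  assumes "(f has_derivative (\<lambda>h. G \<bullet> h)) (at x)" and "\<And>y. f x \<le> f y"
  shows "G = 0"
proof -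
  have "(\<lambda>h. G \<bullet> h) = (\<lambda>h. 0)"
    using differential_zero_maxmin[OF UNIV_I open_UNIV assms(1)] assms(2) by blast
  from fun_cong[OF this, of G] show ?thesis by simp
qed

lemma strongly_convex_grad_attains_min:
  fixes f :: "'a::euclidean_space \<Rightarrow> real"
  assumes cont: "continuous_on UNIV f" and sc: "strongly_convex_grad \<mu> f g" and "\<mu> > 0"
  obtains m where "\<And>u. f m \<le> f u"
proof -
  define R where "R = 2 * norm (g 0) / \<mu>"
  have "R \<ge> 0" using \<open>\<mu> > 0\<close> by (simp add: R_def)
  have outside: "f 0 < f u" if "norm u > R" for u
  proof -
    have "f 0 + g 0 \<bullet> u + \<mu> / 2 * (norm u)\<^sup>2 \<le> f u"
      using sc unfolding strongly_convex_grad_def by (metis diff_zero)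
    moreover have "- (norm (g 0) * norm u) \<le> g 0 \<bullet> u"
      using Cauchy_Schwarz_ineq2[of "g 0" u] by linarith
    moreover have "norm (g 0) * norm u = \<mu> / 2 * (R * norm u)"
      using \<open>\<mu> > 0\<close> by (simp add: R_def)
    moreover have "\<mu> / 2 * (R * norm u) < \<mu> / 2 * (norm u * norm u)"
      using that \<open>R \<ge> 0\<close> \<open>\<mu> > 0\<close> by (intro mult_strict_left_mono mult_strict_right_mono) auto
    ultimately show ?thesis by (simp add: power2_eq_square)
  qed
  obtain m where "m \<in> cball 0 R" and m: "\<And>y. y \<in> cball 0 R \<Longrightarrow> f m \<le> f y"
    using continuous_attains_inf[OF compact_cball _ continuous_on_subset[OF cont]] \<open>R \<ge> 0\<close>
    by (metis cball_eq_empty not_less subset_UNIV)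
  have "f m \<le> f u" for u
  proof (cases "norm u \<le> R")
    case True then show ?thesis using m by simp
  next
    case False
    then show ?thesis using m[of 0] outside[of u] \<open>R \<ge> 0\<close> by simp
  qed
  then show ?thesis using that by blast
qed

lemma has_derivative_sq_dist:
  fixes z :: "'a::real_inner"
  shows "((\<lambda>u. (norm (u - z))\<^sup>2 / (2 * \<gamma>)) has_derivative (\<lambda>h. ((1 / \<gamma>) *\<^sub>R (y - z)) \<bullet> h)) (at y)"
proof -
  have "((\<lambda>u. (u - z) \<bullet> (u - z)) has_derivative (\<lambda>h. (y - z) \<bullet> h + h \<bullet> (y - z))) (at y)"
    by (auto intro!: derivative_eq_intros)
  then have "((\<lambda>u. (norm (u - z))\<^sup>2) has_derivative (\<lambda>h. 2 * ((y - z) \<bullet> h))) (at y)"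
    by (simp add: power2_norm_eq_inner inner_commute)
  then have "((\<lambda>u. (norm (u - z))\<^sup>2 * inverse (2 * \<gamma>)) has_derivative
      (\<lambda>h. 2 * ((y - z) \<bullet> h) * inverse (2 * \<gamma>))) (at y)"
    by (rule has_derivative_mult_left)
  moreover have "2 * ((y - z) \<bullet> h) * inverse (2 * \<gamma>) = ((1 / \<gamma>) *\<^sub>R (y - z)) \<bullet> h" for h
    unfolding inner_scaleR_left by (simp add: field_simps)
  ultimately show ?thesis
    by (simp only: divide_inverse)
qed

lemma prox_eq_implicit_gradient_step:
  fixes f :: "'a::euclidean_space \<Rightarrow> real"
  assumes grad: "\<And>x. (f has_derivative (\<lambda>h. g x \<bullet> h)) (at x)"
    and sc: "strongly_convex_grad \<mu> f g" and "\<mu> \<ge> 0" and "\<gamma> > 0"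
  shows "prox \<gamma> f x = x - \<gamma> *\<^sub>R g (prox \<gamma> f x)"
proof -
  define \<phi> where "\<phi> u = f u + (norm (u - x))\<^sup>2 / (2 * \<gamma>)" for u
  define y where "y = prox \<gamma> f x"
  have \<phi>_grad: "(\<phi> has_derivative (\<lambda>h. (g u + (1 / \<gamma>) *\<^sub>R (u - x)) \<bullet> h)) (at u)" for u
    unfolding \<phi>_def[abs_def] inner_add_left by (intro has_derivative_add grad has_derivative_sq_dist)
  have "strongly_convex_grad (\<mu> + 1 / \<gamma>) \<phi> (\<lambda>u. g u + (1 / \<gamma>) *\<^sub>R (u - x))"
    unfolding \<phi>_def[abs_def] by (intro strongly_convex_grad_add sc strongly_convex_grad_sq_dist)
  moreover have "continuous_on UNIV \<phi>"
    using \<phi>_grad has_derivative_continuous by (blast intro: continuous_at_imp_continuous_on)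
  moreover have "\<mu> + 1 / \<gamma> > 0"
    using assms(3,4) by (simp add: add_nonneg_pos)
  \<comment> \<open>\<open>\<phi>\<close> is even \<open>(\<mu> + 1/\<gamma>)\<close>-strongly convex, so it has a minimiser, and there its gradient vanishes.\<close>
  ultimately obtain m where "\<And>u. \<phi> m \<le> \<phi> u"
    using strongly_convex_grad_attains_min by blast
  then have "\<exists>y. is_arg_min \<phi> (\<lambda>_. True) y"
    by (auto simp: is_arg_min_def not_less)
  then have "is_arg_min \<phi> (\<lambda>_. True) y"
    unfolding y_def prox_def arg_min_def \<phi>_def[abs_def] by (rule someI_ex)
  then have "g y + (1 / \<gamma>) *\<^sub>R (y - x) = 0"
    by (intro gradient_eq_0_at_min[OF \<phi>_grad]) (auto simp: is_arg_min_def not_less)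
  moreover have "\<gamma> *\<^sub>R (g y + (1 / \<gamma>) *\<^sub>R (y - x)) = \<gamma> *\<^sub>R g y + (y - x)"
    using \<open>\<gamma> > 0\<close> by (simp add: scaleR_right_distrib)
  ultimately have "\<gamma> *\<^sub>R g y + (y - x) = 0"
    by simp
  then show ?thesis
    unfolding y_def[symmetric] by (simp add: algebra_simps)
qed

lemma strongly_convex_grad_implicit_step_contraction:
  assumes sc: "strongly_convex_grad \<mu> f g" and "\<mu> \<ge> 0" and "\<gamma> \<ge> 0"
    and step: "y = x - \<gamma> *\<^sub>R g y"
  shows "(1 + \<gamma> * \<mu>)\<^sup>2 * (norm (y - z))\<^sup>2 \<le> (norm (x - z - \<gamma> *\<^sub>R g z))\<^sup>2"
proof -
  define d e where "d = y - z" and "e = g y - g z"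
  have mono: "\<mu> * (norm d)\<^sup>2 \<le> e \<bullet> d"
    unfolding d_def e_def by (rule strongly_convex_grad_inner_ge[OF sc])
  have "\<mu> * norm d \<le> norm e"
  proof (cases "d = 0")
    case False
    have "\<mu> * norm d * norm d \<le> norm e * norm d"
      using mono norm_cauchy_schwarz[of e d] by (simp add: power2_eq_square)
    then show ?thesis using False by simp
  qed (simp add: \<open>\<mu> \<ge> 0\<close>)
  then have "(\<mu> * norm d)\<^sup>2 \<le> (norm e)\<^sup>2"
    using \<open>\<mu> \<ge> 0\<close> by (intro power_mono) auto
  have "(1 + \<gamma> * \<mu>)\<^sup>2 * (norm d)\<^sup>2 = (norm d)\<^sup>2 + 2 * \<gamma> * (\<mu> * (norm d)\<^sup>2) + \<gamma>\<^sup>2 * (\<mu> * norm d)\<^sup>2"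
    by (simp add: power2_eq_square algebra_simps)
  also have "\<dots> \<le> (norm d)\<^sup>2 + 2 * \<gamma> * (e \<bullet> d) + \<gamma>\<^sup>2 * (norm e)\<^sup>2"
    using mono \<open>(\<mu> * norm d)\<^sup>2 \<le> (norm e)\<^sup>2\<close> \<open>\<gamma> \<ge> 0\<close> by (intro add_mono mult_left_mono) auto
  also have "\<dots> = (norm (d + \<gamma> *\<^sub>R e))\<^sup>2"
    unfolding power2_norm_eq_inner by (simp add: inner_add_left inner_add_right inner_commute power2_eq_square)
  also have "d + \<gamma> *\<^sub>R e = x - z - \<gamma> *\<^sub>R g z"
    using step unfolding d_def e_def by (simp add: algebra_simps)
  finally show ?thesis
    unfolding d_def .
qed

lemma prox_sq_dist_le:
  fixes f :: "'a::euclidean_space \<Rightarrow> real"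
  assumes "\<And>x. (f has_derivative (\<lambda>h. g x \<bullet> h)) (at x)"
    and "strongly_convex_grad \<mu> f g" and "\<mu> \<ge> 0" and "\<gamma> > 0"
  shows "(norm (prox \<gamma> f x - z))\<^sup>2 \<le> (1 / (1 + \<gamma> * \<mu>))\<^sup>2 * (norm (x - z - \<gamma> *\<^sub>R g z))\<^sup>2"
proof -
  have "(1 + \<gamma> * \<mu>)\<^sup>2 * (norm (prox \<gamma> f x - z))\<^sup>2 \<le> (norm (x - z - \<gamma> *\<^sub>R g z))\<^sup>2"
    using assms by (intro strongly_convex_grad_implicit_step_contraction prox_eq_implicit_gradient_step) auto
  moreover have "1 + \<gamma> * \<mu> > 0"
    using assms(3,4) by (simp add: add_pos_nonneg)
  ultimately show ?thesis
    by (simp add: field_simps)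
qed

lemma (in prob_space) integral_norm_diff_sq_centered:
  fixes X :: "'a \<Rightarrow> 'v::euclidean_space"
  assumes X: "integrable M X" and X2: "integrable M (\<lambda>\<omega>. (norm (X \<omega>))\<^sup>2)"
    and mean: "expectation X = 0"
  shows "integrable M (\<lambda>\<omega>. (norm (a - X \<omega>))\<^sup>2)"
    and "expectation (\<lambda>\<omega>. (norm (a - X \<omega>))\<^sup>2) = (norm a)\<^sup>2 + expectation (\<lambda>\<omega>. (norm (X \<omega>))\<^sup>2)"
proof -
  have expand: "(norm (a - X \<omega>))\<^sup>2 = ((norm a)\<^sup>2 - 2 * (a \<bullet> X \<omega>)) + (norm (X \<omega>))\<^sup>2" for \<omega>
    unfolding power2_norm_eq_inner by (simp add: inner_diff_left inner_diff_right inner_commute)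
  have lin: "integrable M (\<lambda>\<omega>. (norm a)\<^sup>2 - 2 * (a \<bullet> X \<omega>))"
    using X by simp
  show "integrable M (\<lambda>\<omega>. (norm (a - X \<omega>))\<^sup>2)"
    unfolding expand using lin X2 by simp
  have "expectation (\<lambda>\<omega>. (norm a)\<^sup>2 - 2 * (a \<bullet> X \<omega>)) = (norm a)\<^sup>2"
    using X mean by (simp add: prob_space)
  then show "expectation (\<lambda>\<omega>. (norm (a - X \<omega>))\<^sup>2) = (norm a)\<^sup>2 + expectation (\<lambda>\<omega>. (norm (X \<omega>))\<^sup>2)"
    unfolding expand by (simp only: Bochner_Integration.integral_add[OF lin X2])
qed

lemma (in prob_space) prox_sample_sq_dist_le:
  fixes f :: "'a \<Rightarrow> 'v::euclidean_space \<Rightarrow> real"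
  assumes grad: "\<And>\<xi> x. \<xi> \<in> space M \<Longrightarrow> (f \<xi> has_derivative (\<lambda>h. g \<xi> x \<bullet> h)) (at x)"
    and sc: "\<And>\<xi>. \<xi> \<in> space M \<Longrightarrow> strongly_convex_grad \<mu> (f \<xi>) (g \<xi>)"
    and "\<mu> \<ge> 0" and "\<gamma> > 0"
    and g_int: "integrable M (\<lambda>\<xi>. g \<xi> z)" and g_sq_int: "integrable M (\<lambda>\<xi>. (norm (g \<xi> z))\<^sup>2)"
    and g_mean: "expectation (\<lambda>\<xi>. g \<xi> z) = 0"
    and prox_meas: "(\<lambda>(\<xi>, y). prox \<gamma> (f \<xi>) y) \<in> borel_measurable (M \<Otimes>\<^sub>M borel)"
  shows "(\<integral>\<^sup>+ \<xi>. ennreal ((norm (prox \<gamma> (f \<xi>) x - z))\<^sup>2) \<partial>M)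
    \<le> ennreal ((1 / (1 + \<gamma> * \<mu>))\<^sup>2 * ((norm (x - z))\<^sup>2 + \<gamma>\<^sup>2 * expectation (\<lambda>\<xi>. (norm (g \<xi> z))\<^sup>2)))"
proof -
  define \<rho> where "\<rho> = (1 / (1 + \<gamma> * \<mu>))\<^sup>2"
  define X where "X = (\<lambda>\<xi>. \<gamma> *\<^sub>R g \<xi> z)"
  have X: "integrable M X" "integrable M (\<lambda>\<xi>. (norm (X \<xi>))\<^sup>2)" "expectation X = 0"
    using g_int g_sq_int g_mean by (simp_all add: X_def power_mult_distrib)
  have "(\<integral>\<^sup>+ \<xi>. ennreal ((norm (prox \<gamma> (f \<xi>) x - z))\<^sup>2) \<partial>M)
      \<le> (\<integral>\<^sup>+ \<xi>. ennreal (\<rho> * (norm ((x - z) - X \<xi>))\<^sup>2) \<partial>M)"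
    unfolding \<rho>_def X_def
    by (intro nn_integral_mono ennreal_leI prox_sq_dist_le grad sc \<open>\<mu> \<ge> 0\<close> \<open>\<gamma> > 0\<close>) auto
  also have "\<dots> = ennreal (\<rho> * expectation (\<lambda>\<xi>. (norm ((x - z) - X \<xi>))\<^sup>2))"
    using integral_norm_diff_sq_centered(1)[OF X] by (simp add: nn_integral_eq_integral \<rho>_def)
  also have "expectation (\<lambda>\<xi>. (norm ((x - z) - X \<xi>))\<^sup>2)
      = (norm (x - z))\<^sup>2 + \<gamma>\<^sup>2 * expectation (\<lambda>\<xi>. (norm (g \<xi> z))\<^sup>2)"
    unfolding integral_norm_diff_sq_centered(2)[OF X] by (simp add: X_def power_mult_distrib)
  finally show ?thesis
    unfolding \<rho>_def .
qed

lemma sppm_Suc_stream_Cons: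
  "sppm \<gamma> f x0 (\<xi> ## \<omega>) (Suc k) = sppm \<gamma> f (prox \<gamma> (f \<xi>) x0) \<omega> k"
  by (induction k) auto

lemma measurable_sppm:
  assumes "(\<lambda>(\<xi>, y). prox \<gamma> (f \<xi>) y) \<in> borel_measurable (D \<Otimes>\<^sub>M borel)"
  shows "(\<lambda>\<omega>. sppm \<gamma> f x0 \<omega> k) \<in> borel_measurable (stream_space D)"
proof (induction k)
  case (Suc k)
  have "(\<lambda>\<omega>. (\<omega> !! k, sppm \<gamma> f x0 \<omega> k)) \<in> measurable (stream_space D) (D \<Otimes>\<^sub>M borel)"
    using Suc by (intro measurable_Pair measurable_snth)
  from measurable_compose[OF this assms] show ?case by simp
qed simp

lemma (in prob_space) sppm_nn_integral_sq_dist_le: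
  fixes f :: "'a \<Rightarrow> 'v::euclidean_space \<Rightarrow> real"
  assumes prox_meas: "(\<lambda>(\<xi>, y). prox \<gamma> (f \<xi>) y) \<in> borel_measurable (M \<Otimes>\<^sub>M borel)"
    and step: "\<And>x. (\<integral>\<^sup>+ \<xi>. ennreal ((norm (prox \<gamma> (f \<xi>) x - z))\<^sup>2) \<partial>M)
                    \<le> ennreal (\<rho> * (norm (x - z))\<^sup>2 + b)"
    and "\<rho> \<ge> 0" and "b \<ge> 0"
  shows "(\<integral>\<^sup>+ \<omega>. ennreal ((norm (sppm \<gamma> f x0 \<omega> k - z))\<^sup>2) \<partial>stream_space M)
    \<le> ennreal (\<rho> ^ k * (norm (x0 - z))\<^sup>2 + b * (\<Sum>i<k. \<rho> ^ i))"
proof (induction k arbitrary: x0)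
  case 0
  then show ?case
    using prob_space.emeasure_space_1[OF prob_space_stream_space] by simp
next
  case (Suc k)
  let ?S = "b * (\<Sum>i<k. \<rho> ^ i)"
  have "?S \<ge> 0" and "\<rho> ^ k \<ge> 0"
    using \<open>\<rho> \<ge> 0\<close> \<open>b \<ge> 0\<close> by (simp_all add: sum_nonneg)
  have [measurable]: "(\<lambda>\<omega>. sppm \<gamma> f x0 \<omega> (Suc k)) \<in> borel_measurable (stream_space M)"
    by (rule measurable_sppm[OF prox_meas])
  have [measurable]: "(\<lambda>\<xi>. prox \<gamma> (f \<xi>) x0) \<in> borel_measurable M"
    using measurable_compose[OF measurable_Pair[OF measurable_ident_sets[OF refl] measurable_const] prox_meas]
    by simp
  have "(\<lambda>\<omega>. ennreal ((norm (sppm \<gamma> f x0 \<omega> (Suc k) - z))\<^sup>2)) \<in> borel_measurable (stream_space M)"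
    by measurable
  then have "(\<integral>\<^sup>+ \<omega>. ennreal ((norm (sppm \<gamma> f x0 \<omega> (Suc k) - z))\<^sup>2) \<partial>stream_space M)
      = (\<integral>\<^sup>+ \<xi>. (\<integral>\<^sup>+ \<omega>. ennreal ((norm (sppm \<gamma> f (prox \<gamma> (f \<xi>) x0) \<omega> k - z))\<^sup>2)
                  \<partial>stream_space M) \<partial>M)"
    by (simp only: nn_integral_stream_space sppm_Suc_stream_Cons)
  also have "\<dots> \<le> (\<integral>\<^sup>+ \<xi>. ennreal (\<rho> ^ k) * ennreal ((norm (prox \<gamma> (f \<xi>) x0 - z))\<^sup>2) + ennreal ?S \<partial>M)"
    using Suc.IH \<open>?S \<ge> 0\<close> \<open>\<rho> ^ k \<ge> 0\<close>
    by (intro nn_integral_mono) (simp add: ennreal_mult)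
  also have "\<dots> = ennreal (\<rho> ^ k) * (\<integral>\<^sup>+ \<xi>. ennreal ((norm (prox \<gamma> (f \<xi>) x0 - z))\<^sup>2) \<partial>M) + ennreal ?S"
    by (simp add: nn_integral_add nn_integral_cmult emeasure_space_1)
  also have "\<dots> \<le> ennreal (\<rho> ^ k) * ennreal (\<rho> * (norm (x0 - z))\<^sup>2 + b) + ennreal ?S"
    by (intro add_mono mult_left_mono step) auto
  also have "\<dots> = ennreal (\<rho> ^ k * (\<rho> * (norm (x0 - z))\<^sup>2 + b) + ?S)"
    using \<open>?S \<ge> 0\<close> \<open>\<rho> ^ k \<ge> 0\<close> \<open>\<rho> \<ge> 0\<close> \<open>b \<ge> 0\<close> by (simp add: ennreal_mult)
  also have "\<rho> ^ k * (\<rho> * (norm (x0 - z))\<^sup>2 + b) + ?S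
      = \<rho> ^ Suc k * (norm (x0 - z))\<^sup>2 + b * (\<Sum>i<Suc k. \<rho> ^ i)"
    by (simp add: algebra_simps)
  finally show ?case .
qed

lemma sppm_noise_sum_le:
  fixes \<gamma> \<mu> \<sigma> :: real
  assumes "\<gamma> > 0" and "\<mu> > 0" and "\<sigma> \<ge> 0"
  shows "(1 / (1 + \<gamma> * \<mu>))\<^sup>2 * (\<gamma>\<^sup>2 * \<sigma>) * (\<Sum>i<k. ((1 / (1 + \<gamma> * \<mu>))\<^sup>2) ^ i)
    \<le> \<gamma> * \<sigma> / (\<gamma> * \<mu>\<^sup>2 + 2 * \<mu>)"
proof -
  define q where "q = 1 + \<gamma> * \<mu>"
  define \<rho> where "\<rho> = (1 / q)\<^sup>2"
  have q2: "q\<^sup>2 - 1 = \<gamma> * (\<gamma> * \<mu>\<^sup>2 + 2 * \<mu>)"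
    by (simp add: q_def power2_eq_square algebra_simps)
  have "q > 1"
    using assms by (simp add: q_def)
  then have "q\<^sup>2 > 1" and "0 \<le> \<rho>" and "\<rho> < 1"
    by (simp_all add: \<rho>_def power_divide)
  then have ratio: "\<rho> / (1 - \<rho>) = 1 / (q\<^sup>2 - 1)"
    using \<open>q > 1\<close> by (simp add: \<rho>_def field_simps)
  have "(\<Sum>i<k. \<rho> ^ i) \<le> 1 / (1 - \<rho>)"
    using \<open>0 \<le> \<rho>\<close> \<open>\<rho> < 1\<close> by (simp add: sum_gp_strict divide_right_mono)
  then have "\<rho> * (\<gamma>\<^sup>2 * \<sigma>) * (\<Sum>i<k. \<rho> ^ i) \<le> \<rho> * (\<gamma>\<^sup>2 * \<sigma>) * (1 / (1 - \<rho>))"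
    using \<open>0 \<le> \<rho>\<close> assms(3) by (intro mult_left_mono) auto
  also have "\<dots> = \<gamma>\<^sup>2 * \<sigma> * (\<rho> / (1 - \<rho>))"
    by simp
  also have "\<dots> = \<gamma>\<^sup>2 * \<sigma> / (q\<^sup>2 - 1)"
    unfolding ratio by simp
  also have "\<dots> = \<gamma> * \<sigma> / (\<gamma> * \<mu>\<^sup>2 + 2 * \<mu>)"
    using assms unfolding q2 by (simp add: power2_eq_square)
  finally show ?thesis
    unfolding \<rho>_def q_def .
qed

theorem mainTheorem3:
  fixes D :: "'b measure"
    and f :: "'b \<Rightarrow> 'a::euclidean_space \<Rightarrow> real"
    and g :: "'b \<Rightarrow> 'a \<Rightarrow> 'a"
    and \<mu> \<gamma> :: real and xs x0 :: 'a and k :: nat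
  assumes D: "prob_space D"
    and grad: "\<And>\<xi> x. \<xi> \<in> space D \<Longrightarrow> (f \<xi> has_derivative (\<lambda>h. g \<xi> x \<bullet> h)) (at x)"
    and sc: "\<And>\<xi>. \<xi> \<in> space D \<Longrightarrow> strongly_convex_grad \<mu> (f \<xi>) (g \<xi>)"
    and mu: "\<mu> > 0"
    and f_int: "\<And>x. integrable D (\<lambda>\<xi>. f \<xi> x)"
    and g_int: "\<And>x. integrable D (\<lambda>\<xi>. g \<xi> x)"
    and interchange: "\<And>x. ((\<lambda>y. \<integral>\<xi>. f \<xi> y \<partial>D) has_derivative
                              (\<lambda>h. (\<integral>\<xi>. g \<xi> x \<partial>D) \<bullet> h)) (at x)"
    and sigma_int: "integrable D (\<lambda>\<xi>. (norm (g \<xi> xs))\<^sup>2)"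
    and xs_min: "\<And>x. (\<integral>\<xi>. f \<xi> xs \<partial>D) \<le> (\<integral>\<xi>. f \<xi> x \<partial>D)"
    and gamma: "\<gamma> > 0"
    and prox_meas: "(\<lambda>(\<xi>, y). prox \<gamma> (f \<xi>) y) \<in> borel_measurable (D \<Otimes>\<^sub>M borel)"
  shows "(\<integral>\<^sup>+ \<omega>. ennreal ((norm (sppm \<gamma> f x0 \<omega> k - xs))\<^sup>2) \<partial>stream_space D)
           \<le> ennreal ((1 / (1 + \<gamma> * \<mu>)) ^ (2 * k) * (norm (x0 - xs))\<^sup>2
                      + \<gamma> * (\<integral>\<xi>. (norm (g \<xi> xs))\<^sup>2 \<partial>D) / (\<gamma> * \<mu>\<^sup>2 + 2 * \<mu>))"
proof -
  interpret D: prob_space D by (rule D)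
  define \<rho> where "\<rho> = (1 / (1 + \<gamma> * \<mu>))\<^sup>2"
  define \<sigma> where "\<sigma> = (\<integral>\<xi>. (norm (g \<xi> xs))\<^sup>2 \<partial>D)"
  have "\<sigma> \<ge> 0" and "\<rho> \<ge> 0"
    by (simp_all add: \<sigma>_def \<rho>_def)
  have "(\<integral>\<xi>. g \<xi> xs \<partial>D) = 0"
    using gradient_eq_0_at_min[OF interchange xs_min] .
  then have "(\<integral>\<^sup>+ \<xi>. ennreal ((norm (prox \<gamma> (f \<xi>) x - xs))\<^sup>2) \<partial>D)
      \<le> ennreal (\<rho> * (norm (x - xs))\<^sup>2 + \<rho> * (\<gamma>\<^sup>2 * \<sigma>))" for x
    using D.prox_sample_sq_dist_le[OF grad sc _ gamma g_int sigma_int _ prox_meas] mu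
    by (simp add: \<rho>_def \<sigma>_def distrib_left)
  then have "(\<integral>\<^sup>+ \<omega>. ennreal ((norm (sppm \<gamma> f x0 \<omega> k - xs))\<^sup>2) \<partial>stream_space D)
      \<le> ennreal (\<rho> ^ k * (norm (x0 - xs))\<^sup>2 + \<rho> * (\<gamma>\<^sup>2 * \<sigma>) * (\<Sum>i<k. \<rho> ^ i))"
    using D.sppm_nn_integral_sq_dist_le[OF prox_meas] \<open>\<sigma> \<ge> 0\<close> \<open>\<rho> \<ge> 0\<close> by simp
  also have "\<dots> \<le> ennreal ((1 / (1 + \<gamma> * \<mu>)) ^ (2 * k) * (norm (x0 - xs))\<^sup>2
                      + \<gamma> * \<sigma> / (\<gamma> * \<mu>\<^sup>2 + 2 * \<mu>))"
    using sppm_noise_sum_le[OF gamma mu \<open>\<sigma> \<ge> 0\<close>, of k]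
    by (intro ennreal_leI) (simp add: \<rho>_def power_mult)
  finally show ?thesis
    unfolding \<sigma>_def .
qed

end
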